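(* For all $\nu\in\mathbb C$, integers $m\ge0$ and $x\in\mathbb C\setminus\{0\}$, $$x^mR_{m,\nu}(x;q)=\sum_{n=0}^m x^{2n}\sum_{j=0}^{m-n}\frac{(q^{n-m};q)_j(q^{n+1};q)_j}{(q;q)_j(q;q)_j}\,q^{j(\nu+m-n)}.$$ If moreover $q^{\nu+i}\ne1$ for all integers $i\ge0$, then $$R_{m,\nu}(x;q)=\sum_{n=0}^m x^{2n-m}\frac{(q^\nu;q)_{m-n}}{(q;q)_n}\sum_{j=0}^{n}\frac{(q^{-n};q)_j(q^{\nu+m-n};q)_j}{(q;q)_j(q^\nu;q)_j}\,q^{j(n+1)}.$$
   Context: Fix $0<q<1$; $(a;q)_0=1$, $(a;q)_k=\prod_{i=0}^{k-1}(1-aq^i)$. The $q$-Lommel functions $R_{m,\nu}(x;q)$ are defined by $R_{-1,\nu}=0$, $R_{0,\nu}=1$ and $R_{m+1,\nu}(x;q)=\big(x+\frac{1-q^\nu}{x}\big)R_{m,\nu+1}(x;q)-R_{m-1,\nu+2}(x;q)$ for $m\ge0$. *)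

theory Defs
  imports "HOL-Analysis.Analysis"
begin

definition qpoch :: "complex \<Rightarrow> complex \<Rightarrow> nat \<Rightarrow> complex" where
  "qpoch a q k = (\<Prod>i<k. (1 - a * q ^ i))"

text \<open>q-Lommel functions R_{m,nu}(x;q); q^nu is (complex_of_real q) powr nu.
  R_{1,nu} = (x + (1-q^nu)/x) R_{0,nu+1} - R_{-1,nu+2} with R_{-1}=0, R_0=1.\<close>
fun qLommel :: "real \<Rightarrow> nat \<Rightarrow> complex \<Rightarrow> complex \<Rightarrow> complex" where
  "qLommel q 0 \<nu> x = 1"
| "qLommel q (Suc 0) \<nu> x = (x + (1 - complex_of_real q powr \<nu>) / x) * qLommel q 0 (\<nu> + 1) x"
| "qLommel q (Suc (Suc m)) \<nu> x =
     (x + (1 - complex_of_real q powr \<nu>) / x) * qLommel q (Suc m) (\<nu> + 1) x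
     - qLommel q m (\<nu> + 2) x"

end

theory Submission
  imports Defs
begin

(* With t = q^nu, the function x^m R_{m,nu}(x;q) is a polynomial P_m(t,x) in t and x^2, and the
   defining recurrence reads P_{m+2}(t) = (x^2 + 1 - t) P_{m+1}(q t) - x^2 P_m(q^2 t).
   Its coefficient of x^(2n) t^j is (-1)^j q^(j choose 2) [m-n, j]_q [n+j, j]_q: the recurrence for
   these numbers is the q-Pascal rule applied to both Gaussian binomials.  The first formula is this
   expansion, rewritten with (q^-k;q)_j q^(kj) and (q^(n+1);q)_j.  For the second, expand
   (t q^j;q)_(m-n) by the q-binomial theorem, exchange the two finite sums and sum the inner one
   again by the q-binomial theorem; dividing by (t;q)_j needs q^(nu+i) <> 1. *)

lemma qpoch_0 [simp]: "qpoch a Q 0 = 1"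
  by (simp add: qpoch_def)

lemma qpoch_Suc: "qpoch a Q (Suc n) = qpoch a Q n * (1 - a * Q ^ n)"
  by (simp add: qpoch_def)

lemma qpoch_add: "qpoch a Q (i + l) = qpoch a Q i * qpoch (a * Q ^ i) Q l"
  by (induction l) (simp_all add: qpoch_Suc algebra_simps power_add)

lemma qpoch_Suc_left: "qpoch a Q (Suc n) = (1 - a) * qpoch (a * Q) Q n"
  using qpoch_add[of a Q 1 n] by (simp add: qpoch_Suc)

lemma qpoch_eq_0_iff: "qpoch a Q n = 0 \<longleftrightarrow> (\<exists>i<n. a * Q ^ i = 1)"
  by (auto simp: qpoch_def)

lemma powr_add_diff_of_nat:
  fixes z :: complex
  assumes "z \<noteq> 0" "n \<le> m"
  shows "z powr (a + of_nat m - of_nat n) = z powr a * z ^ (m - n)"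
proof -
  have "a + of_nat m - of_nat n = a + of_nat (m - n)"
    using assms(2) by (simp add: of_nat_diff)
  then have "z powr (a + of_nat m - of_nat n) = z powr a * z powr of_nat (m - n)"
    by (simp only: powr_add)
  then show ?thesis
    using assms(1) by (simp add: powr_nat')
qed

definition qfact :: "complex \<Rightarrow> nat \<Rightarrow> complex" where
  "qfact Q n = qpoch Q Q n"

definition qbinom :: "complex \<Rightarrow> nat \<Rightarrow> nat \<Rightarrow> complex" where
  "qbinom Q k j = (if j \<le> k then qfact Q k / (qfact Q j * qfact Q (k - j)) else 0)"

definition qsgn :: "complex \<Rightarrow> nat \<Rightarrow> complex" where
  "qsgn Q j = (- 1) ^ j * Q ^ (j choose 2)"

lemma qsgn_0 [simp]: "qsgn Q 0 = 1"
  by (simp add: qsgn_def numeral_2_eq_2)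

lemma qsgn_Suc: "qsgn Q (Suc j) = - (Q ^ j * qsgn Q j)"
  by (simp add: qsgn_def numeral_2_eq_2 power_add)

lemma qfact_0 [simp]: "qfact Q 0 = 1"
  by (simp add: qfact_def)

lemma qfact_Suc: "qfact Q (Suc n) = qfact Q n * (1 - Q ^ Suc n)"
  by (simp add: qfact_def qpoch_Suc)

lemma qbinom_eq_0: "k < j \<Longrightarrow> qbinom Q k j = 0"
  by (simp add: qbinom_def)

lemma qbinom_symmetric: "qbinom Q (a + b) a = qbinom Q (a + b) b"
  by (simp add: qbinom_def mult.commute)

locale nonzero_not_root_of_unity =
  fixes Q :: complex
  assumes nonzero: "Q \<noteq> 0"
    and power_Suc_neq_1: "Q ^ Suc i \<noteq> 1"
begin

lemma one_minus_power_Suc_neq_0: "1 - Q ^ Suc i \<noteq> 0"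
  using power_Suc_neq_1 by simp

lemma qfact_nonzero [simp]: "qfact Q n \<noteq> 0"
  by (induction n) (simp_all add: qfact_Suc power_Suc_neq_1 del: power_Suc)

lemma qbinom_0_right [simp]: "qbinom Q k 0 = 1"
  by (simp add: qbinom_def)

lemma qbinom_self [simp]: "qbinom Q k k = 1"
  by (simp add: qbinom_def)

lemma qbinom_Suc_Suc: "qbinom Q (Suc k) (Suc j) = qbinom Q k j + Q ^ Suc j * qbinom Q k (Suc j)"
proof (cases "j < k")
  case True
  then obtain d where k: "k = Suc (j + d)"
    using less_imp_Suc_add by blast
  define u v where "u = Q ^ Suc j" and "v = Q ^ Suc d"
  have "Q ^ Suc k = u * v"
    unfolding u_def v_def power_add[symmetric] k by simp
  then have pascal_lhs: "qbinom Q (Suc k) (Suc j) =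
      qfact Q k * (1 - u * v) / (qfact Q j * (1 - u) * (qfact Q d * (1 - v)))"
    by (simp add: qbinom_def k qfact_Suc u_def v_def del: power_Suc)
  have pascal_rhs: "qbinom Q k j = qfact Q k / (qfact Q j * (qfact Q d * (1 - v)))"
    "qbinom Q k (Suc j) = qfact Q k / (qfact Q j * (1 - u) * qfact Q d)"
    by (simp_all add: qbinom_def k qfact_Suc u_def v_def del: power_Suc)
  have "1 - u \<noteq> 0" "1 - v \<noteq> 0"
    unfolding u_def v_def by (fact one_minus_power_Suc_neq_0)+
  then show ?thesis
    unfolding pascal_lhs pascal_rhs u_def[symmetric]
    by (simp add: divide_simps) (simp add: algebra_simps)
next
  case False
  then show ?thesis
    by (cases "j = k") (simp_all add: qbinom_eq_0)
qed

lemma qbinom_absorb: "qbinom Q k (Suc j) * (1 - Q ^ Suc j) = qbinom Q k j * (1 - Q ^ (k - j))"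
proof (cases "j < k")
  case True
  then obtain d where k: "k = Suc (j + d)"
    using less_imp_Suc_add by blast
  show ?thesis
    using one_minus_power_Suc_neq_0[of j] one_minus_power_Suc_neq_0[of d]
    by (simp add: qbinom_def k qfact_Suc field_simps)
next
  case False
  then show ?thesis
    by (cases "j = k") (simp_all add: qbinom_eq_0)
qed

lemma qpoch_inverse_power:
  "qpoch (inverse (Q ^ k)) Q j * Q ^ (k * j) = qsgn Q j * qbinom Q k j * qfact Q j"
proof (induction j)
  case 0
  then show ?case by simp
next
  case (Suc j)
  have shift: "qbinom Q k j * (Q ^ k - Q ^ j) = - (Q ^ j * (qbinom Q k j * (1 - Q ^ (k - j))))"
  proof (cases "j \<le> k")
    case True
    then have "Q ^ k = Q ^ j * Q ^ (k - j)"
      by (simp flip: power_add)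
    then show ?thesis by (simp add: algebra_simps)
  qed (simp add: qbinom_eq_0)
  have "qpoch (inverse (Q ^ k)) Q (Suc j) * Q ^ (k * Suc j) =
      qpoch (inverse (Q ^ k)) Q j * Q ^ (k * j) * (Q ^ k - Q ^ j)"
    using nonzero by (simp add: qpoch_Suc power_add field_simps)
  also have "\<dots> = qsgn Q j * qfact Q j * (qbinom Q k j * (Q ^ k - Q ^ j))"
    by (simp only: Suc) (simp add: mult_ac)
  also have "\<dots> = - (Q ^ j * qsgn Q j * qfact Q j) * (qbinom Q k j * (1 - Q ^ (k - j)))"
    unfolding shift by (simp add: algebra_simps)
  also have "\<dots> = qsgn Q (Suc j) * qbinom Q k (Suc j) * qfact Q (Suc j)"
    by (simp only: qbinom_absorb[symmetric] qsgn_Suc qfact_Suc) (simp add: algebra_simps)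
  finally show ?case .
qed

lemma qpoch_power_Suc: "qpoch (Q ^ Suc n) Q j = qbinom Q (n + j) j * qfact Q j"
  using qpoch_add[of Q Q n j] by (simp add: qbinom_def qfact_def[symmetric] field_simps)

lemma qpoch_eq_sum_qbinom: "qpoch z Q k = (\<Sum>i\<le>k. qbinom Q k i * qsgn Q i * z ^ i)"
proof (induction k arbitrary: z)
  case 0
  then show ?case by simp
next
  case (Suc k)
  have "(\<Sum>i\<le>Suc k. qbinom Q (Suc k) i * qsgn Q i * z ^ i) =
      1 + (\<Sum>i\<le>k. qbinom Q k i * qsgn Q (Suc i) * z ^ Suc i)
        + (\<Sum>i\<le>k. qbinom Q k (Suc i) * qsgn Q (Suc i) * (z * Q) ^ Suc i)"
    by (simp add: sum.atMost_Suc_shift qbinom_Suc_Suc sum.distrib algebra_simps power_mult_distrib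
        del: sum.atMost_Suc)
  also have "(\<Sum>i\<le>k. qbinom Q k i * qsgn Q (Suc i) * z ^ Suc i) = - z * qpoch (z * Q) Q k"
    by (simp add: Suc sum_distrib_left qsgn_Suc power_mult_distrib algebra_simps)
  also have "(\<Sum>i\<le>k. qbinom Q k (Suc i) * qsgn Q (Suc i) * (z * Q) ^ Suc i) =
      (\<Sum>i\<le>Suc k. qbinom Q k i * qsgn Q i * (z * Q) ^ i) - 1"
    by (simp only: sum.atMost_Suc_shift) simp
  also have "\<dots> = qpoch (z * Q) Q k - 1"
    by (simp add: Suc qbinom_eq_0)
  finally show ?case
    by (simp add: qpoch_Suc_left algebra_simps)
qed

end

(* lommel_coeff Q m n j is the coefficient of x^(2n) t^j in x^m R_{m,nu}(x;Q) with t = Q^nu;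
   lommel_xcoeff collects the coefficient of x^(2n) as a polynomial in t. *)
definition lommel_coeff :: "complex \<Rightarrow> nat \<Rightarrow> nat \<Rightarrow> nat \<Rightarrow> complex" where
  "lommel_coeff Q m n j =
     (if n \<le> m then qsgn Q j * qbinom Q (m - n) j * qbinom Q (n + j) j else 0)"

definition lommel_xcoeff :: "complex \<Rightarrow> nat \<Rightarrow> nat \<Rightarrow> complex \<Rightarrow> complex" where
  "lommel_xcoeff Q m n t = (\<Sum>j\<le>m. lommel_coeff Q m n j * t ^ j)"

definition lommel_poly :: "complex \<Rightarrow> nat \<Rightarrow> complex \<Rightarrow> complex \<Rightarrow> complex" where
  "lommel_poly Q m t x = (\<Sum>n\<le>m. x ^ (2 * n) * lommel_xcoeff Q m n t)"

lemma lommel_coeff_eq_0: "m < n \<or> m < j \<Longrightarrow> lommel_coeff Q m n j = 0"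
  by (auto simp: lommel_coeff_def qbinom_eq_0)

lemma lommel_xcoeff_extend:
  "m \<le> N \<Longrightarrow> lommel_xcoeff Q m n t = (\<Sum>j\<le>N. lommel_coeff Q m n j * t ^ j)"
  unfolding lommel_xcoeff_def by (rule sum.mono_neutral_left) (auto simp: lommel_coeff_eq_0)

lemma lommel_xcoeff_eq_0: "m < n \<Longrightarrow> lommel_xcoeff Q m n t = 0"
  by (simp add: lommel_xcoeff_def lommel_coeff_eq_0)

lemma lommel_poly_extend:
  "m \<le> N \<Longrightarrow> lommel_poly Q m t x = (\<Sum>n\<le>N. x ^ (2 * n) * lommel_xcoeff Q m n t)"
  unfolding lommel_poly_def by (rule sum.mono_neutral_left) (auto simp: lommel_xcoeff_eq_0)

lemma lommel_xcoeff_eq: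
  assumes "n \<le> m"
  shows "lommel_xcoeff Q m n t =
    (\<Sum>j\<le>m - n. qsgn Q j * qbinom Q (m - n) j * qbinom Q (n + j) j * t ^ j)"
proof -
  have "lommel_xcoeff Q m n t = (\<Sum>j\<le>m - n. lommel_coeff Q m n j * t ^ j)"
    unfolding lommel_xcoeff_def
    by (rule sum.mono_neutral_right) (auto simp: lommel_coeff_def qbinom_eq_0)
  then show ?thesis
    using assms by (simp add: lommel_coeff_def)
qed

lemma lommel_poly_0: "lommel_poly Q 0 t x = 1"
  by (simp add: lommel_poly_def lommel_xcoeff_def lommel_coeff_def qbinom_def)

context nonzero_not_root_of_unity
begin

lemma lommel_coeff_Suc_Suc:
  "lommel_coeff Q (Suc (Suc m)) n j =
     (if n = 0 then 0 else Q ^ j * lommel_coeff Q (Suc m) (n - 1) j)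
     + Q ^ j * lommel_coeff Q (Suc m) n j
     - (if j = 0 then 0 else Q ^ (j - 1) * lommel_coeff Q (Suc m) n (j - 1))
     - (if n = 0 then 0 else Q ^ (2 * j) * lommel_coeff Q m (n - 1) j)"
proof (cases "n \<le> Suc (Suc m)")
  case False
  then show ?thesis by (auto simp: lommel_coeff_def)
next
  case True
  then obtain k where m: "Suc (Suc m) = n + k"
    using le_Suc_ex by blast
  consider "j = 0" | "n = 0" "j \<noteq> 0" | "k = 0" "n \<noteq> 0" "j \<noteq> 0"
    | n' k' i where "n = Suc n'" "k = Suc k'" "j = Suc i"
    by (metis not0_implies_Suc)
  then show ?thesis
  proof cases
    case 1
    then show ?thesis
      using m by (cases n) (auto simp: lommel_coeff_def)
  next
    case 2
    then show ?thesis
      using m by (cases j) (auto simp: lommel_coeff_def qbinom_Suc_Suc qsgn_Suc algebra_simps)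
  next
    case 3
    then show ?thesis
      using m by (auto simp: lommel_coeff_def qbinom_eq_0)
  next
    case 4
    define A B C D P where "A = qbinom Q k' i" and "B = qbinom Q k' (Suc i)"
      and "C = qbinom Q (Suc (n' + i)) i" and "D = qbinom Q (Suc (n' + i)) (Suc i)"
      and "P = Q ^ Suc i"
    have "m = n' + k'"
      using m 4 by simp
    then have coeffs: "lommel_coeff Q (Suc (Suc m)) n j = qsgn Q j * (A + P * B) * (C + P * D)"
      "lommel_coeff Q (Suc m) (n - 1) j = qsgn Q j * (A + P * B) * D"
      "lommel_coeff Q (Suc m) n j = qsgn Q j * B * (C + P * D)"
      "lommel_coeff Q (Suc m) n (j - 1) = qsgn Q i * A * C"
      "lommel_coeff Q m (n - 1) j = qsgn Q j * B * D"
      using 4 by (simp_all add: lommel_coeff_def qbinom_Suc_Suc A_def B_def C_def D_def P_def)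
    have powers: "qsgn Q j = - (Q ^ (j - 1) * qsgn Q i)" "Q ^ j = P" "Q ^ (2 * j) = P * P"
      by (simp_all only: 4 qsgn_Suc P_def mult_2 power_add diff_Suc_1)
    have "n \<noteq> 0" "j \<noteq> 0"
      using 4 by simp_all
    then show ?thesis
      unfolding coeffs powers by (simp add: algebra_simps)
  qed
qed

lemma lommel_xcoeff_Suc_Suc:
  "lommel_xcoeff Q (Suc (Suc m)) n t =
     (if n = 0 then 0 else lommel_xcoeff Q (Suc m) (n - 1) (t * Q))
     + (1 - t) * lommel_xcoeff Q (Suc m) n (t * Q)
     - (if n = 0 then 0 else lommel_xcoeff Q m (n - 1) (t * Q ^ 2))"
proof -
  let ?a = "lommel_coeff Q" and ?N = "Suc (Suc m)"
  have "lommel_xcoeff Q ?N n t =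
      (\<Sum>j\<le>?N. (if n = 0 then 0 else ?a (Suc m) (n - 1) j * (t * Q) ^ j))
      + (\<Sum>j\<le>?N. ?a (Suc m) n j * (t * Q) ^ j)
      - (\<Sum>j\<le>?N. (if j = 0 then 0 else ?a (Suc m) n (j - 1) * Q ^ (j - 1) * t ^ j))
      - (\<Sum>j\<le>?N. (if n = 0 then 0 else ?a m (n - 1) j * (t * Q ^ 2) ^ j))"
    unfolding lommel_xcoeff_def lommel_coeff_Suc_Suc sum.distrib[symmetric] sum_subtractf[symmetric]
    by (intro sum.cong refl) (simp add: algebra_simps power_mult_distrib flip: power_mult)
  also have "(\<Sum>j\<le>?N. (if j = 0 then 0 else ?a (Suc m) n (j - 1) * Q ^ (j - 1) * t ^ j))
      = t * lommel_xcoeff Q (Suc m) n (t * Q)"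
    by (subst sum.atMost_Suc_shift)
      (simp add: lommel_xcoeff_def sum_distrib_left power_mult_distrib algebra_simps)
  also have "(\<Sum>j\<le>?N. (if n = 0 then 0 else ?a (Suc m) (n - 1) j * (t * Q) ^ j))
      = (if n = 0 then 0 else lommel_xcoeff Q (Suc m) (n - 1) (t * Q))"
    by (simp add: lommel_xcoeff_extend[of "Suc m" ?N])
  also have "(\<Sum>j\<le>?N. ?a (Suc m) n j * (t * Q) ^ j) = lommel_xcoeff Q (Suc m) n (t * Q)"
    by (simp add: lommel_xcoeff_extend[of "Suc m" ?N])
  also have "(\<Sum>j\<le>?N. (if n = 0 then 0 else ?a m (n - 1) j * (t * Q ^ 2) ^ j))
      = (if n = 0 then 0 else lommel_xcoeff Q m (n - 1) (t * Q ^ 2))"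
    by (simp add: lommel_xcoeff_extend[of m ?N])
  finally show ?thesis
    by (simp add: algebra_simps)
qed

lemma lommel_poly_Suc_Suc:
  "lommel_poly Q (Suc (Suc m)) t x =
     (x ^ 2 + 1 - t) * lommel_poly Q (Suc m) (t * Q) x - x ^ 2 * lommel_poly Q m (t * Q ^ 2) x"
proof -
  let ?c = "lommel_xcoeff Q" and ?N = "Suc (Suc m)"
  have "lommel_poly Q ?N t x =
      (\<Sum>n\<le>?N. x ^ (2 * n) * (if n = 0 then 0 else ?c (Suc m) (n - 1) (t * Q)))
      + (1 - t) * (\<Sum>n\<le>?N. x ^ (2 * n) * ?c (Suc m) n (t * Q))
      - (\<Sum>n\<le>?N. x ^ (2 * n) * (if n = 0 then 0 else ?c m (n - 1) (t * Q ^ 2)))"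
    unfolding lommel_poly_def lommel_xcoeff_Suc_Suc sum_distrib_left
      sum.distrib[symmetric] sum_subtractf[symmetric]
    by (intro sum.cong refl) (simp add: algebra_simps)
  also have "(\<Sum>n\<le>?N. x ^ (2 * n) * (if n = 0 then 0 else ?c (Suc m) (n - 1) (t * Q)))
      = x ^ 2 * lommel_poly Q (Suc m) (t * Q) x"
    by (subst sum.atMost_Suc_shift)
      (simp add: lommel_poly_def sum_distrib_left power2_eq_square algebra_simps)
  also have "(\<Sum>n\<le>?N. x ^ (2 * n) * ?c (Suc m) n (t * Q)) = lommel_poly Q (Suc m) (t * Q) x"
    by (simp add: lommel_poly_extend[of "Suc m" ?N])
  also have "(\<Sum>n\<le>?N. x ^ (2 * n) * (if n = 0 then 0 else ?c m (n - 1) (t * Q ^ 2)))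
      = x ^ 2 * lommel_poly Q m (t * Q ^ 2) x"
    by (subst sum.atMost_Suc_shift)
      (simp add: lommel_poly_extend[of m "Suc m"] sum_distrib_left power2_eq_square algebra_simps)
  finally show ?thesis
    by (simp add: algebra_simps)
qed

lemma lommel_poly_1: "lommel_poly Q (Suc 0) t x = x ^ 2 + 1 - t"
  by (simp add: lommel_poly_def lommel_xcoeff_def lommel_coeff_def qsgn_Suc qbinom_eq_0
      algebra_simps power2_eq_square)

lemma lommel_xcoeff_eq_sum_qpoch:
  assumes "n \<le> m"
  shows "lommel_xcoeff Q m n t =
    (\<Sum>j\<le>m - n. qpoch (inverse (Q ^ (m - n))) Q j * qpoch (Q ^ Suc n) Q j / (qfact Q j * qfact Q j)
      * (t * Q ^ (m - n)) ^ j)"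
  unfolding lommel_xcoeff_eq[OF assms]
proof (intro sum.cong refl)
  fix j
  have "qpoch (inverse (Q ^ (m - n))) Q j * (t * Q ^ (m - n)) ^ j =
      qsgn Q j * qbinom Q (m - n) j * qfact Q j * t ^ j"
    by (simp only: power_mult_distrib qpoch_inverse_power[symmetric] power_mult[symmetric])
      (simp add: mult_ac)
  moreover have "qpoch (inverse (Q ^ (m - n))) Q j * qpoch (Q ^ Suc n) Q j / (qfact Q j * qfact Q j)
      * (t * Q ^ (m - n)) ^ j = qpoch (inverse (Q ^ (m - n))) Q j * (t * Q ^ (m - n)) ^ j
      * qbinom Q (n + j) j / qfact Q j"
    by (simp only: qpoch_power_Suc) (simp add: field_simps)
  ultimately show "qsgn Q j * qbinom Q (m - n) j * qbinom Q (n + j) j * t ^ j =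
      qpoch (inverse (Q ^ (m - n))) Q j * qpoch (Q ^ Suc n) Q j / (qfact Q j * qfact Q j)
      * (t * Q ^ (m - n)) ^ j"
    by simp
qed

lemma lommel_xcoeff_eq_transformed:
  assumes "n \<le> m" and t: "\<And>i. t * Q ^ i \<noteq> 1"
  shows "lommel_xcoeff Q m n t = qpoch t Q (m - n) / qfact Q n *
    (\<Sum>j\<le>n. qpoch (inverse (Q ^ n)) Q j * qpoch (t * Q ^ (m - n)) Q j / (qfact Q j * qpoch t Q j)
      * Q ^ (j * (n + 1)))"
proof -
  define k where "k = m - n"
  have summand: "qpoch t Q k / qfact Q n * (qpoch (inverse (Q ^ n)) Q j * qpoch (t * Q ^ k) Q j
      / (qfact Q j * qpoch t Q j) * Q ^ (j * (n + 1)))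
    = qsgn Q j * qbinom Q n j * Q ^ j / qfact Q n * qpoch (t * Q ^ j) Q k" for j
  proof -
    have qpoch_split: "qpoch t Q k * qpoch (t * Q ^ k) Q j = qpoch t Q j * qpoch (t * Q ^ j) Q k"
      by (metis add.commute qpoch_add)
    have inverse_power: "qpoch (inverse (Q ^ n)) Q j * Q ^ (j * (n + 1)) =
        qsgn Q j * qbinom Q n j * qfact Q j * Q ^ j"
      using qpoch_inverse_power[of n j] by (simp add: algebra_simps power_add)
    have "qpoch t Q j \<noteq> 0"
      using t by (simp add: qpoch_eq_0_iff)
    have "qpoch t Q k / qfact Q n * (qpoch (inverse (Q ^ n)) Q j * qpoch (t * Q ^ k) Q j
        / (qfact Q j * qpoch t Q j) * Q ^ (j * (n + 1))) =
      (qpoch t Q k * qpoch (t * Q ^ k) Q j) * (qpoch (inverse (Q ^ n)) Q j * Q ^ (j * (n + 1)))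
        / (qfact Q n * qfact Q j * qpoch t Q j)"
      by (simp add: field_simps)
    also have "\<dots> = qsgn Q j * qbinom Q n j * Q ^ j / qfact Q n * qpoch (t * Q ^ j) Q k"
      unfolding qpoch_split inverse_power using \<open>qpoch t Q j \<noteq> 0\<close> by (simp add: field_simps)
    finally show ?thesis .
  qed
  have "qpoch t Q k / qfact Q n * (\<Sum>j\<le>n. qpoch (inverse (Q ^ n)) Q j * qpoch (t * Q ^ k) Q j
      / (qfact Q j * qpoch t Q j) * Q ^ (j * (n + 1)))
    = (\<Sum>j\<le>n. qsgn Q j * qbinom Q n j * Q ^ j / qfact Q n * qpoch (t * Q ^ j) Q k)"
    by (simp only: sum_distrib_left summand)
  also have "\<dots> = (\<Sum>j\<le>n. \<Sum>i\<le>k. qbinom Q k i * qsgn Q i * t ^ i / qfact Q n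
      * (qbinom Q n j * qsgn Q j * (Q ^ Suc i) ^ j))"
    unfolding qpoch_eq_sum_qbinom[of "t * Q ^ _"] sum_distrib_left
    by (intro sum.cong refl)
      (simp add: power_mult_distrib power_mult[symmetric] mult.commute[of _ j] algebra_simps)
  also have "\<dots> = (\<Sum>i\<le>k. qbinom Q k i * qsgn Q i * t ^ i / qfact Q n * qpoch (Q ^ Suc i) Q n)"
    unfolding qpoch_eq_sum_qbinom[of "Q ^ Suc _" n] sum_distrib_left by (rule sum.swap)
  also have "\<dots> = (\<Sum>i\<le>k. qsgn Q i * qbinom Q k i * qbinom Q (n + i) i * t ^ i)"
    by (intro sum.cong refl)
      (simp only: qpoch_power_Suc qbinom_symmetric[symmetric], simp add: add.commute)
  also have "\<dots> = lommel_xcoeff Q m n t"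
    unfolding k_def by (rule lommel_xcoeff_eq[OF assms(1), symmetric])
  finally show ?thesis
    by (simp add: k_def)
qed

lemma lommel_poly_eq_sum_qpoch:
  "lommel_poly Q m (Q powr \<nu>) x =
     (\<Sum>n = 0..m. x ^ (2 * n) *
        (\<Sum>j = 0..m - n.
           qpoch (Q powr (of_int (int n - int m))) Q j * qpoch (Q ^ (n + 1)) Q j
           / (qpoch Q Q j * qpoch Q Q j)
           * Q powr (of_nat j * (\<nu> + of_nat m - of_nat n))))"
  unfolding lommel_poly_def atLeast0AtMost
proof (intro sum.cong refl arg_cong2[where f = "(*)"])
  fix n
  assume "n \<in> {..m}"
  then have "n \<le> m" by simp
  have "(of_int (int n - int m) :: complex) = - of_nat (m - n)"
    using \<open>n \<le> m\<close> by (simp add: of_nat_diff)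
  then have "Q powr (of_int (int n - int m)) = inverse (Q ^ (m - n))"
    using nonzero by (simp add: powr_minus powr_nat')
  moreover have "Q powr (of_nat j * (\<nu> + of_nat m - of_nat n)) = (Q powr \<nu> * Q ^ (m - n)) ^ j" for j
    using \<open>n \<le> m\<close> nonzero by (simp flip: powr_power add: powr_add_diff_of_nat)
  ultimately show "lommel_xcoeff Q m n (Q powr \<nu>) = (\<Sum>j\<le>m - n.
           qpoch (Q powr (of_int (int n - int m))) Q j * qpoch (Q ^ (n + 1)) Q j
           / (qpoch Q Q j * qpoch Q Q j)
           * Q powr (of_nat j * (\<nu> + of_nat m - of_nat n)))"
    by (simp only: lommel_xcoeff_eq_sum_qpoch[OF \<open>n \<le> m\<close>] qfact_def Suc_eq_plus1)
qed

lemma lommel_poly_divide_power_eq_sum_qpoch: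
  assumes "x \<noteq> 0" and "\<And>i. Q powr (\<nu> + of_nat i) \<noteq> 1"
  shows "lommel_poly Q m (Q powr \<nu>) x / x ^ m =
    (\<Sum>n = 0..m. x powi (2 * int n - int m)
       * qpoch (Q powr \<nu>) Q (m - n) / qpoch Q Q n
       * (\<Sum>j = 0..n.
            qpoch (Q powr (- of_nat n)) Q j * qpoch (Q powr (\<nu> + of_nat m - of_nat n)) Q j
            / (qpoch Q Q j * qpoch (Q powr \<nu>) Q j)
            * Q ^ (j * (n + 1))))" (is "_ = ?rhs")
proof -
  have t: "Q powr \<nu> * Q ^ i \<noteq> 1" for i
    using assms(2)[of i] nonzero by (simp add: powr_add powr_nat')
  have "x powi (2 * int n - int m) = x ^ (2 * n) / x ^ m" for n
  proof -
    have "x powi (2 * int n - int m) = x powi (int (2 * n) - int m)"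
      by simp
    also have "\<dots> = x powi int (2 * n) / x powi int m"
      using assms(1) by (rule power_int_diff[OF disjI1])
    finally show ?thesis
      by (simp only: power_int_of_nat)
  qed
  then have "lommel_poly Q m (Q powr \<nu>) x / x ^ m =
      (\<Sum>n\<le>m. x powi (2 * int n - int m) * lommel_xcoeff Q m n (Q powr \<nu>))"
    by (simp add: lommel_poly_def sum_divide_distrib)
  also have "\<dots> = ?rhs"
    unfolding atLeast0AtMost
  proof (intro sum.cong refl)
    fix n
    assume "n \<in> {..m}"
    then have "n \<le> m" by simp
    have "Q powr (- of_nat n) = inverse (Q ^ n)"
      using nonzero by (simp add: powr_minus powr_nat')
    then show "x powi (2 * int n - int m) * lommel_xcoeff Q m n (Q powr \<nu>) =
      x powi (2 * int n - int m) * qpoch (Q powr \<nu>) Q (m - n) / qpoch Q Q n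
       * (\<Sum>j\<le>n.
            qpoch (Q powr (- of_nat n)) Q j * qpoch (Q powr (\<nu> + of_nat m - of_nat n)) Q j
            / (qpoch Q Q j * qpoch (Q powr \<nu>) Q j)
            * Q ^ (j * (n + 1)))"
      by (simp add: lommel_xcoeff_eq_transformed[OF \<open>n \<le> m\<close> t]
          powr_add_diff_of_nat[OF nonzero \<open>n \<le> m\<close>] qfact_def)
  qed
  finally show ?thesis .
qed

end

lemma nonzero_not_root_of_unity_of_real:
  assumes "0 < q" "q < 1"
  shows "nonzero_not_root_of_unity (complex_of_real q)"
proof
  show "complex_of_real q \<noteq> 0"
    using assms by simp
  fix i
  have "q ^ Suc i < 1"
    using assms by (rule power_Suc_less_one)
  then show "complex_of_real q ^ Suc i \<noteq> 1"
    by (metis less_irrefl of_real_eq_1_iff of_real_power)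
qed

lemma qLommel_eq_lommel_poly:
  assumes "0 < q" "q < 1" "x \<noteq> 0"
  shows "x ^ m * qLommel q m \<nu> x = lommel_poly (complex_of_real q) m (complex_of_real q powr \<nu>) x"
proof -
  define Q where "Q = complex_of_real q"
  interpret nonzero_not_root_of_unity Q
    unfolding Q_def using assms(1,2) by (rule nonzero_not_root_of_unity_of_real)
  have powr_shift: "Q powr (\<nu> + 1) = Q powr \<nu> * Q" "Q powr (\<nu> + 2) = Q powr \<nu> * Q ^ 2" for \<nu>
    using nonzero by (simp_all add: Q_def powr_add)
  show ?thesis
    unfolding Q_def[symmetric]
  proof (induction m arbitrary: \<nu> rule: induct_nat_012)
    case 0
    show ?case by (simp add: lommel_poly_0)
  next
    case 1
    show ?case
      using assms(3) by (simp add: lommel_poly_1 Q_def[symmetric] field_simps power2_eq_square)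
  next
    case (ge2 m)
    have "x ^ Suc (Suc m) * qLommel q (Suc (Suc m)) \<nu> x =
        (x ^ 2 + 1 - Q powr \<nu>) * (x ^ Suc m * qLommel q (Suc m) (\<nu> + 1) x)
        - x ^ 2 * (x ^ m * qLommel q m (\<nu> + 2) x)"
      using assms(3) by (simp add: Q_def[symmetric] field_simps power2_eq_square)
    then show ?case
      by (simp only: ge2 powr_shift lommel_poly_Suc_Suc)
  qed
qed

theorem mainTheorem15:
  fixes q :: real and \<nu> x :: complex and m :: nat
  assumes "0 < q" and "q < 1" and "x \<noteq> 0"
  shows "x ^ m * qLommel q m \<nu> x =
           (\<Sum>n = 0..m. x ^ (2 * n) *
              (\<Sum>j = 0..m - n.
                 qpoch (complex_of_real q powr (of_int (int n - int m))) (complex_of_real q) j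
                 * qpoch (complex_of_real q ^ (n + 1)) (complex_of_real q) j
                 / (qpoch (complex_of_real q) (complex_of_real q) j
                    * qpoch (complex_of_real q) (complex_of_real q) j)
                 * complex_of_real q powr (of_nat j * (\<nu> + of_nat m - of_nat n))))
       \<and> ((\<forall>i::nat. complex_of_real q powr (\<nu> + of_nat i) \<noteq> 1) \<longrightarrow>
           qLommel q m \<nu> x =
           (\<Sum>n = 0..m. x powi (2 * int n - int m)
              * qpoch (complex_of_real q powr \<nu>) (complex_of_real q) (m - n)
              / qpoch (complex_of_real q) (complex_of_real q) n
              * (\<Sum>j = 0..n.
                   qpoch (complex_of_real q powr (- of_nat n)) (complex_of_real q) j
                   * qpoch (complex_of_real q powr (\<nu> + of_nat m - of_nat n)) (complex_of_real q) j
                   / (qpoch (complex_of_real q) (complex_of_real q) j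
                      * qpoch (complex_of_real q powr \<nu>) (complex_of_real q) j)
                   * complex_of_real q ^ (j * (n + 1)))))"
proof -
  define Q where "Q = complex_of_real q"
  interpret nonzero_not_root_of_unity Q
    unfolding Q_def using assms(1,2) by (rule nonzero_not_root_of_unity_of_real)
  have poly: "x ^ m * qLommel q m \<nu> x = lommel_poly Q m (Q powr \<nu>) x"
    unfolding Q_def using assms by (rule qLommel_eq_lommel_poly)
  then have lommel: "qLommel q m \<nu> x = lommel_poly Q m (Q powr \<nu>) x / x ^ m"
    using assms(3) by (simp add: field_simps)
  show ?thesis
    unfolding Q_def[symmetric]
    using poly lommel lommel_poly_eq_sum_qpoch[of m \<nu> x]
      lommel_poly_divide_power_eq_sum_qpoch[OF assms(3), of \<nu> m]
    by (simp only:) blast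
qed

end
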